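(* Let the data vector $S\in\mathbb{R}^d$ be Gaussian with mean $\beta^*\in\mathbb{R}^d$ and identity covariance. Let $D\in\mathbb{R}^{p\times d}$, $P\in\mathbb{R}^{p\times p}$, $q\in\mathbb{R}^p$, let $\Lambda_g^*$ be the convex conjugate of the log-MGF of the randomization, and let $b_{\mathcal{R}_O}$ be a barrier function on $\mathcal{R}_O\subset\mathbb{R}^p$. Define \[ \Gamma(\beta^* )=\sup_{z\in\mathbb{R}^d}\Big\{z^T\beta^*-\tfrac12 z^Tz-\inf_{o\in\mathbb{R}^p}\big\{\Lambda_g^*(Dz+Po+q)+b_{\mathcal{R}_O}(o)\big\}\Big\} \] and the pseudo truncated likelihood $\tilde\ell_E(s\mid\beta^* )$ by $\log\tilde\ell_E(s\mid\beta^* )=-s^Ts/2+\beta^{*T}s-\Gamma(\beta^* )+\text{const}$. Then the approximate selective MLE $\beta^{*\mathrm{MLE}}$, the maximizer of $\beta^*\mapsto\log\tilde\ell_E(s\mid\beta^* )$, satisfies \[ \nabla\Gamma\big(\beta^{*\mathrm{MLE}}\big)=s. \]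
   Context: $\Lambda_g^*(w)=\sup_t\{t^Tw-\Lambda_g(t)\}$ where $\Lambda_g(t)=\log\mathbb{E}[\exp(t^T\Omega)]$ is the log-MGF of the randomization $\Omega\in\mathbb{R}^p$. A barrier function $b_{\mathcal{R}_O}$ is a convex penalty finite on the interior of $\mathcal{R}_O$ increasing continuously towards its boundary. *)

theory Defs
  imports "HOL-Probability.Probability"
begin

definition log_mgf :: "(real^'p) measure \<Rightarrow> real^'p \<Rightarrow> ereal" where
  "log_mgf M t =
     (if integrable M (\<lambda>w. exp (t \<bullet> w))
      then ereal (ln (\<integral>w. exp (t \<bullet> w) \<partial>M)) else \<infinity>)"

definition conj_log_mgf :: "(real^'p) measure \<Rightarrow> real^'p \<Rightarrow> ereal" where
  "conj_log_mgf M w = (SUP t. ereal (t \<bullet> w) - log_mgf M t)"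

definition barrier :: "(real^'p) set \<Rightarrow> (real^'p \<Rightarrow> ereal) \<Rightarrow> bool" where
  "barrier R b \<longleftrightarrow>
     (\<forall>u\<in>interior R. \<bar>b u\<bar> \<noteq> \<infinity>) \<and>
     (\<forall>u. u \<notin> interior R \<longrightarrow> b u = \<infinity>) \<and>
     convex_on (interior R) (\<lambda>u. real_of_ereal (b u)) \<and>
     continuous_on (interior R) (\<lambda>u. real_of_ereal (b u)) \<and>
     (\<forall>x\<in>frontier R. (b \<longlongrightarrow> \<infinity>) (at x within interior R))"

definition Gamma_fn ::
  "(real^'p) measure \<Rightarrow> real^'d^'p \<Rightarrow> real^'p^'p \<Rightarrow> real^'p \<Rightarrow> (real^'p \<Rightarrow> ereal)
     \<Rightarrow> real^'d \<Rightarrow> ereal" where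
  "Gamma_fn M D P q b \<beta> =
     (SUP z. ereal (z \<bullet> \<beta> - (z \<bullet> z) / 2)
        - (INF u. conj_log_mgf M (D *v z + P *v u + q) + b u))"

definition log_pseudo_lik ::
  "(real^'p) measure \<Rightarrow> real^'d^'p \<Rightarrow> real^'p^'p \<Rightarrow> real^'p \<Rightarrow> (real^'p \<Rightarrow> ereal)
     \<Rightarrow> real \<Rightarrow> real^'d \<Rightarrow> real^'d \<Rightarrow> ereal" where
  "log_pseudo_lik M D P q b c s \<beta> =
     ereal (- (s \<bullet> s) / 2 + \<beta> \<bullet> s + c) - Gamma_fn M D P q b \<beta>"

end

theory Submission
  imports Defs
begin

text \<open>Once \<open>\<Gamma>\<close> is finite, the log pseudo likelihood is \<open>\<beta> \<bullet> s - \<Gamma> \<beta>\<close> up to an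
  additive constant. At an interior maximizer its derivative vanishes, so the gradient of
  \<open>\<Gamma>\<close> there equals the data \<open>s\<close>. Nothing about the randomization or the barrier is
  used beyond finiteness of \<open>\<Gamma>\<close>.\<close>

lemma gderiv_at_maximizer_of_linear_minus:
  fixes G :: "'a::real_inner \<Rightarrow> real"
  assumes "G differentiable (at x)"
    and "\<And>y. y \<bullet> s - G y \<le> x \<bullet> s - G x"
  shows "GDERIV G x :> s"
proof -
  from assms(1) obtain G' where G': "(G has_derivative G') (at x)"
    unfolding differentiable_def by blast
  have "((\<lambda>y. y \<bullet> s - G y) has_derivative (\<lambda>v. v \<bullet> s - G' v)) (at x)"
    using G' by (intro derivative_eq_intros) auto
  then have "(\<lambda>v. v \<bullet> s - G' v) = (\<lambda>v. 0)"
    by (rule has_derivative_local_max) (use assms(2) in auto)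
  then have "G' = (\<lambda>v. v \<bullet> s)"
    by (auto simp: fun_eq_iff dest: spec)
  with G' show ?thesis
    unfolding gderiv_def by simp
qed

lemma log_pseudo_lik_finite_Gamma:
  assumes "\<bar>Gamma_fn M D P q b \<beta>\<bar> \<noteq> \<infinity>"
  shows "log_pseudo_lik M D P q b c s \<beta>
           = ereal (- (s \<bullet> s) / 2 + c + (\<beta> \<bullet> s - real_of_ereal (Gamma_fn M D P q b \<beta>)))"
  using assms unfolding log_pseudo_lik_def by (cases "Gamma_fn M D P q b \<beta>") auto

theorem lemma2:
  fixes M :: "(real^'p) measure"
    and D :: "real^'d^'p" and P :: "real^'p^'p" and q :: "real^'p"
    and R :: "(real^'p) set" and b :: "real^'p \<Rightarrow> ereal"
    and c :: real and s :: "real^'d" and \<beta>mle :: "real^'d"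
  assumes "prob_space M" and "sets M = sets borel"
    and "barrier R b"
    and fin: "\<And>\<beta>. \<bar>Gamma_fn M D P q b \<beta>\<bar> \<noteq> \<infinity>"
    and dif: "(\<lambda>\<beta>. real_of_ereal (Gamma_fn M D P q b \<beta>)) differentiable (at \<beta>mle)"
    and mx: "\<And>\<beta>. log_pseudo_lik M D P q b c s \<beta> \<le> log_pseudo_lik M D P q b c s \<beta>mle"
  shows "GDERIV (\<lambda>\<beta>. real_of_ereal (Gamma_fn M D P q b \<beta>)) \<beta>mle :> s"
proof (rule gderiv_at_maximizer_of_linear_minus[OF dif])
  fix \<beta>
  show "\<beta> \<bullet> s - real_of_ereal (Gamma_fn M D P q b \<beta>)
          \<le> \<beta>mle \<bullet> s - real_of_ereal (Gamma_fn M D P q b \<beta>mle)"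
    using mx[of \<beta>] by (simp add: log_pseudo_lik_finite_Gamma fin)
qed

end
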